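(* Let $G=(V,E)$ be a finite, simple, connected graph on $n=n(G)$ vertices with minimum degree $\delta$ and maximum degree $\Delta\ge 2$. Then \[ Z(G)=F_1(G)\le \frac{(\Delta-2)\,n-(\Delta-\delta)+2}{\Delta-1}. \]
   Context: All graphs are finite, simple and undirected. A set $S\subseteq V$ is a zero forcing set ($1$-forcing set) of $G$ if the following process colors every vertex: initially the vertices of $S$ are colored and all others uncolored; repeatedly, whenever a colored vertex has exactly one uncolored neighbor (at most one uncolored neighbor), that neighbor becomes colored. The zero forcing number $Z(G)=F_1(G)$ is the minimum cardinality of a zero forcing set of $G$. *)

theory Defs
  imports Complex_Main
begin

definition simple_graph :: "'a set \<Rightarrow> ('a \<Rightarrow> 'a \<Rightarrow> bool) \<Rightarrow> bool" where
  "simple_graph V E \<longleftrightarrow> finite V \<and> (\<forall>x y. E x y \<longrightarrow> E y x) \<and> (\<forall>x. \<not> E x x)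
     \<and> (\<forall>x y. E x y \<longrightarrow> x \<in> V \<and> y \<in> V)"

definition connected_graph :: "'a set \<Rightarrow> ('a \<Rightarrow> 'a \<Rightarrow> bool) \<Rightarrow> bool" where
  "connected_graph V E \<longleftrightarrow> V \<noteq> {} \<and>
     (\<forall>u\<in>V. \<forall>v\<in>V. (\<lambda>x y. E x y \<and> x \<in> V \<and> y \<in> V)\<^sup>*\<^sup>* u v)"

definition neighbors :: "'a set \<Rightarrow> ('a \<Rightarrow> 'a \<Rightarrow> bool) \<Rightarrow> 'a \<Rightarrow> 'a set" where
  "neighbors V E v = {u \<in> V. E v u}"

definition degree :: "'a set \<Rightarrow> ('a \<Rightarrow> 'a \<Rightarrow> bool) \<Rightarrow> 'a \<Rightarrow> nat" where
  "degree V E v = card (neighbors V E v)"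

definition max_degree :: "'a set \<Rightarrow> ('a \<Rightarrow> 'a \<Rightarrow> bool) \<Rightarrow> nat" where
  "max_degree V E = Max (degree V E ` V)"

definition min_degree :: "'a set \<Rightarrow> ('a \<Rightarrow> 'a \<Rightarrow> bool) \<Rightarrow> nat" where
  "min_degree V E = Min (degree V E ` V)"

text \<open>The set of vertices eventually coloured by the zero forcing process started
from S: the least set containing S and closed under the colour-change rule
(a coloured vertex whose neighbours other than w are all coloured colours w).
This is the (unique) final coloured set of the process.\<close>
inductive_set zf_closure :: "'a set \<Rightarrow> ('a \<Rightarrow> 'a \<Rightarrow> bool) \<Rightarrow> 'a set \<Rightarrow> 'a set"
  for V E S where
  init: "v \<in> S \<Longrightarrow> v \<in> zf_closure V E S"
| force: "u \<in> zf_closure V E S \<Longrightarrow> w \<in> neighbors V E u \<Longrightarrow>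
           (\<forall>x\<in>neighbors V E u. x \<noteq> w \<longrightarrow> x \<in> zf_closure V E S) \<Longrightarrow>
           w \<in> zf_closure V E S"

definition zero_forcing_set :: "'a set \<Rightarrow> ('a \<Rightarrow> 'a \<Rightarrow> bool) \<Rightarrow> 'a set \<Rightarrow> bool" where
  "zero_forcing_set V E S \<longleftrightarrow> S \<subseteq> V \<and> V \<subseteq> zf_closure V E S"

definition zero_forcing_number :: "'a set \<Rightarrow> ('a \<Rightarrow> 'a \<Rightarrow> bool) \<Rightarrow> nat" where
  "zero_forcing_number V E = Min {card S | S. zero_forcing_set V E S}"

end

theory Submission
  imports Defs
begin

(*
  Call a pair (S, C) a forced core if
  S \<subseteq> C \<subseteq> V, every vertex of C is coloured by the process started from S, and every
  vertex of C has a neighbour inside C.  The closed neighbourhood N[v] of a vertex v of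
  minimum degree \<delta>, with S = N[v] minus one neighbour, is a forced core with
  |C| = \<delta> + 1 and |C| - |S| = 1.  While C \<noteq> V, connectivity gives an edge u w leaving C;
  adding all outside neighbours of u to C and all but w of them to S yields a new forced
  core (u forces w, since u already has a neighbour in C it has at most \<Delta> - 1 outside
  neighbours).  Each step raises |C| - |S| by one and |C| by at most \<Delta> - 1, so the
  invariant (\<Delta> - 1)(|C| - |S|) \<ge> |C| + (\<Delta> - \<delta> - 2) is preserved.  When C = V, S is a
  zero forcing set and the invariant is exactly the claimed bound.
*)

lemma zf_closure_mono:
  assumes "x \<in> zf_closure V E S" "S \<subseteq> T"
  shows "x \<in> zf_closure V E T"
  using assms
proof (induction rule: zf_closure.induct)
  case (init v) then show ?case by (auto intro: zf_closure.init)
next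
  case (force u w) then show ?case by (auto intro: zf_closure.force)
qed

lemma zero_forcing_number_le:
  assumes "finite V" "zero_forcing_set V E S"
  shows "zero_forcing_number V E \<le> card S"
proof -
  have "{card S | S. zero_forcing_set V E S} \<subseteq> {..card V}"
    using assms(1) by (auto simp: zero_forcing_set_def intro: card_mono)
  then have "finite {card S | S. zero_forcing_set V E S}"
    using finite_subset by blast
  then show ?thesis
    unfolding zero_forcing_number_def using assms(2) by (intro Min_le) auto
qed

lemma walk_leaves_set:
  assumes "(\<lambda>x y. E x y \<and> x \<in> V \<and> y \<in> V)\<^sup>*\<^sup>* a b" "a \<in> C" "b \<notin> C"
  shows "\<exists>u w. E u w \<and> u \<in> C \<and> w \<notin> C \<and> w \<in> V"
  using assms
proof (induction rule: rtranclp_induct)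
  case base then show ?case by simp
next
  case (step y z) then show ?case by (cases "y \<in> C") auto
qed

lemma connected_boundary_edge:
  assumes conn: "connected_graph V E" and "C \<subseteq> V" "C \<noteq> {}" "C \<noteq> V"
  obtains u w where "E u w" "u \<in> C" "w \<in> V" "w \<notin> C"
proof -
  obtain a b where a: "a \<in> C" and b: "b \<in> V" "b \<notin> C" using assms(2-4) by blast
  have "(\<lambda>x y. E x y \<and> x \<in> V \<and> y \<in> V)\<^sup>*\<^sup>* a b"
    using conn a b(1) assms(2) unfolding connected_graph_def by blast
  from walk_leaves_set[OF this a b(2)] show ?thesis using that by blast
qed

lemma connected_vertex_has_neighbour:
  assumes sg: "simple_graph V E" and conn: "connected_graph V E"
    and edge: "E a b" and v: "v \<in> V"
  obtains w where "E v w"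
proof -
  have "a \<in> V" "b \<in> V" "a \<noteq> b" using sg edge by (auto simp: simple_graph_def)
  then have "{v} \<noteq> V" by blast
  moreover have "{v} \<subseteq> V" "{v} \<noteq> {}" using v by auto
  ultimately obtain u w where "E u w" "u \<in> {v}"
    using connected_boundary_edge[OF conn, of "{v}"] by metis
  then show ?thesis using that by blast
qed

lemma degree_le_max_degree:
  assumes "finite V" "v \<in> V"
  shows "degree V E v \<le> max_degree V E"
  using assms by (simp add: max_degree_def)

lemma min_degree_attained:
  assumes "finite V" "V \<noteq> {}"
  obtains v where "v \<in> V" "degree V E v = min_degree V E"
proof -
  have "Min (degree V E ` V) \<in> degree V E ` V" using assms by (intro Min_in) auto
  then obtain v where "v \<in> V" "Min (degree V E ` V) = degree V E v" by (rule imageE)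
  then show ?thesis using that unfolding min_degree_def by simp
qed

lemma max_degree_attained:
  assumes "finite V" "V \<noteq> {}"
  obtains v where "v \<in> V" "degree V E v = max_degree V E"
proof -
  have "Max (degree V E ` V) \<in> degree V E ` V" using assms by (intro Max_in) auto
  then obtain v where "v \<in> V" "Max (degree V E ` V) = degree V E v" by (rule imageE)
  then show ?thesis using that unfolding max_degree_def by simp
qed

text \<open>(S, C) is a forced core if S colours all of C and C induces no isolated vertex.
  The last condition guarantees that a vertex of C has at most \<Delta> - 1 neighbours
  outside C.\<close>
definition forced_core :: "'a set \<Rightarrow> ('a \<Rightarrow> 'a \<Rightarrow> bool) \<Rightarrow> 'a set \<Rightarrow> 'a set \<Rightarrow> bool" where
  "forced_core V E S C \<longleftrightarrow> S \<subseteq> C \<and> C \<subseteq> V \<and> C \<subseteq> zf_closure V E S \<and> (\<forall>u\<in>C. \<exists>x\<in>C. E u x)"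

lemma closed_neighbourhood_core:
  assumes sg: "simple_graph V E" and v: "v \<in> V" and vw: "E v w"
  shows "\<exists>S C. forced_core V E S C \<and> C \<noteq> {}
           \<and> card C = degree V E v + 1 \<and> card S = degree V E v"
proof -
  define N where "N = neighbors V E v"
  define S where "S = insert v (N - {w})"
  define C where "C = insert v N"
  have wN: "w \<in> N" and vN: "v \<notin> N" and finN: "finite N"
    using sg vw by (auto simp: N_def neighbors_def simple_graph_def)
  have "w \<in> zf_closure V E S"
    by (rule zf_closure.force[of v]) (auto simp: S_def N_def[symmetric] wN intro: zf_closure.init)
  then have "C \<subseteq> zf_closure V E S"
    by (auto simp: C_def S_def intro: zf_closure.init)
  moreover have "\<exists>x\<in>C. E u x" if "u \<in> C" for u
  proof (cases "u = v")
    case True then show ?thesis using vw wN by (auto simp: C_def)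
  next
    case False
    then have "E v u" using that by (auto simp: C_def N_def neighbors_def)
    then show ?thesis using sg by (auto simp: C_def simple_graph_def)
  qed
  moreover have "S \<subseteq> C" "C \<subseteq> V" using v by (auto simp: S_def C_def N_def neighbors_def)
  moreover have "card C = card N + 1" using finN vN by (simp add: C_def)
  moreover have "card S = card N"
  proof -
    have "card N > 0" using finN wN card_gt_0_iff by blast
    then show ?thesis using finN vN wN by (simp add: S_def card_Diff_singleton)
  qed
  ultimately show ?thesis
    unfolding forced_core_def by (intro exI[of _ S] exI[of _ C]) (auto simp: N_def degree_def)
qed

lemma forced_core_extend:
  assumes sg: "simple_graph V E" and deg: "\<forall>v\<in>V. degree V E v \<le> D"
    and core: "forced_core V E S C"
    and uw: "E u w" "u \<in> C" "w \<in> V" "w \<notin> C"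
  obtains S' C' where "forced_core V E S' C'" "w \<in> C'" "C \<subseteq> C'"
    "int (card C') \<le> int (card C) + int D - 1"
    "int (card C') - int (card S') = int (card C) - int (card S) + 1"
proof -
  have finV: "finite V" using sg by (simp add: simple_graph_def)
  have SC: "S \<subseteq> C" and CV: "C \<subseteq> V" and Ccl: "C \<subseteq> zf_closure V E S"
    using core by (auto simp: forced_core_def)
  obtain x where x: "x \<in> C" "E u x" using core uw(2) by (auto simp: forced_core_def)
  define U where "U = neighbors V E u - C"
  define S' where "S' = S \<union> (U - {w})"
  define C' where "C' = C \<union> U"
  have finN: "finite (neighbors V E u)" using finV by (simp add: neighbors_def)
  have finU: "finite U" using finN by (simp add: U_def)
  have finC: "finite C" using finV CV by (rule finite_subset[rotated])
  have finS: "finite S" using finC SC by (rule finite_subset[rotated])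
  have wU: "w \<in> U" using uw by (simp add: U_def neighbors_def)
  have xN: "x \<in> neighbors V E u" using x CV by (auto simp: neighbors_def)
  have "card U \<le> card (neighbors V E u - {x})"
    using finN x(1) by (intro card_mono) (auto simp: U_def)
  also have "\<dots> = degree V E u - 1" by (simp add: degree_def card_Diff_singleton[OF xN])
  also have "\<dots> \<le> D - 1" using deg CV uw(2) by (simp add: diff_le_mono subset_iff)
  finally have cardU: "card U \<le> D - 1" .
  have "S \<subseteq> S'" by (auto simp: S'_def)
  have C_cl: "C \<subseteq> zf_closure V E S'"
  proof
    fix y assume "y \<in> C"
    then have "y \<in> zf_closure V E S" using Ccl by blast
    then show "y \<in> zf_closure V E S'" using \<open>S \<subseteq> S'\<close> by (rule zf_closure_mono)
  qed
  have w_cl: "w \<in> zf_closure V E S'"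
  proof (rule zf_closure.force[of u])
    show "u \<in> zf_closure V E S'" using C_cl uw(2) by blast
    show "w \<in> neighbors V E u" using wU by (simp add: U_def)
    show "\<forall>y\<in>neighbors V E u. y \<noteq> w \<longrightarrow> y \<in> zf_closure V E S'"
    proof (intro ballI impI)
      fix y assume "y \<in> neighbors V E u" "y \<noteq> w"
      then have "y \<in> C \<or> y \<in> S'" by (auto simp: S'_def U_def)
      then show "y \<in> zf_closure V E S'" using C_cl by (auto intro: zf_closure.init)
    qed
  qed
  have "U - {w} \<subseteq> zf_closure V E S'" by (auto simp: S'_def intro: zf_closure.init)
  then have C'cl: "C' \<subseteq> zf_closure V E S'" using C_cl w_cl by (auto simp: C'_def)
  have "\<exists>y\<in>C'. E v y" if "v \<in> C'" for v
  proof (cases "v \<in> C")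
    case True then show ?thesis using core by (auto simp: forced_core_def C'_def)
  next
    case False
    then have "E v u" using that sg by (auto simp: C'_def U_def neighbors_def simple_graph_def)
    then show ?thesis using uw(2) by (auto simp: C'_def)
  qed
  moreover have "S' \<subseteq> C'" "C' \<subseteq> V" using SC CV by (auto simp: S'_def C'_def U_def neighbors_def)
  ultimately have core': "forced_core V E S' C'" using C'cl by (simp add: forced_core_def)
  have cardC': "card C' = card C + card U"
    unfolding C'_def using finC finU by (intro card_Un_disjoint) (auto simp: U_def)
  have cardS': "card S' = card S + (card U - 1)"
  proof -
    have "card S' = card S + card (U - {w})"
      unfolding S'_def using finS finU SC by (intro card_Un_disjoint) (auto simp: U_def)
    then show ?thesis by (simp add: card_Diff_singleton[OF wU])
  qed
  have "card U \<ge> 1" using finU wU by (metis One_nat_def Suc_leI card_gt_0_iff empty_iff)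
  show ?thesis
  proof (rule that[OF core'])
    show "w \<in> C'" "C \<subseteq> C'" using wU by (auto simp: C'_def)
    show "int (card C') \<le> int (card C) + int D - 1"
      using cardC' cardU \<open>card U \<ge> 1\<close> by arith
    show "int (card C') - int (card S') = int (card C) - int (card S) + 1"
      using cardC' cardS' \<open>card U \<ge> 1\<close> by arith
  qed
qed

lemma forced_core_grow:
  assumes sg: "simple_graph V E" and conn: "connected_graph V E"
    and deg: "\<forall>v\<in>V. degree V E v \<le> D"
  shows "forced_core V E S C \<Longrightarrow> C \<noteq> {}
    \<Longrightarrow> (int D - 1) * (int (card C) - int (card S)) \<ge> int (card C) + K
    \<Longrightarrow> \<exists>S'. zero_forcing_set V E S' \<and> (int D - 1) * (int (card V) - int (card S')) \<ge> int (card V) + K"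
proof (induction "card (V - C)" arbitrary: C S rule: less_induct)
  case less
  have CV: "C \<subseteq> V" using less.prems(1) by (simp add: forced_core_def)
  show ?case
  proof (cases "C = V")
    case True
    then show ?thesis
      using less.prems by (intro exI[of _ S]) (auto simp: forced_core_def zero_forcing_set_def)
  next
    case False
    then obtain u w where uw: "E u w" "u \<in> C" "w \<in> V" "w \<notin> C"
      using connected_boundary_edge[OF conn CV less.prems(2)] by blast
    then obtain S' C' where core': "forced_core V E S' C'" and "w \<in> C'" "C \<subseteq> C'"
      and grow: "int (card C') \<le> int (card C) + int D - 1"
      and gap: "int (card C') - int (card S') = int (card C) - int (card S) + 1"
      using forced_core_extend[OF sg deg less.prems(1)] by metis
    have "card (V - C') < card (V - C)"
      using sg \<open>w \<in> C'\<close> \<open>C \<subseteq> C'\<close> uw by (intro psubset_card_mono) (auto simp: simple_graph_def)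
    moreover have "(int D - 1) * (int (card C') - int (card S')) \<ge> int (card C') + K"
      using less.prems(3) grow unfolding gap by (simp add: algebra_simps)
    ultimately show ?thesis
      using less.hyps core' \<open>w \<in> C'\<close> by blast
  qed
qed

theorem corollary1:
  fixes V :: "'a set" and E :: "'a \<Rightarrow> 'a \<Rightarrow> bool"
  assumes "simple_graph V E" and "connected_graph V E" and "max_degree V E \<ge> 2"
  shows "real (zero_forcing_number V E)
    \<le> ((real (max_degree V E) - 2) * real (card V) - (real (max_degree V E) - real (min_degree V E)) + 2)
       / (real (max_degree V E) - 1)"
proof -
  define \<Delta> where "\<Delta> = max_degree V E"
  define \<delta> where "\<delta> = min_degree V E"
  have finV: "finite V" and Vne: "V \<noteq> {}"
    using assms(1,2) by (auto simp: simple_graph_def connected_graph_def)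
  obtain z where "z \<in> V" "degree V E z = \<Delta>" using max_degree_attained[OF finV Vne] \<Delta>_def by metis
  then obtain y where "E z y"
    using assms(3) by (force simp: \<Delta>_def degree_def neighbors_def)
  obtain v where v: "v \<in> V" "degree V E v = \<delta>" using min_degree_attained[OF finV Vne] \<delta>_def by metis
  obtain w where "E v w" using connected_vertex_has_neighbour[OF assms(1,2) \<open>E z y\<close> v(1)] .
  then obtain S C where "forced_core V E S C" "C \<noteq> {}" "card C = \<delta> + 1" "card S = \<delta>"
    using closed_neighbourhood_core[OF assms(1) v(1)] v(2) by blast
  then obtain S' where S': "zero_forcing_set V E S'"
    "(int \<Delta> - 1) * (int (card V) - int (card S')) \<ge> int (card V) + (int \<Delta> - int \<delta> - 2)"
    using forced_core_grow[OF assms(1,2), of \<Delta> S C "int \<Delta> - int \<delta> - 2"]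
      degree_le_max_degree[OF finV] by (auto simp: \<Delta>_def)
  have "\<Delta> \<ge> 2" using assms(3) by (simp add: \<Delta>_def)
  have "real (zero_forcing_number V E) * (real \<Delta> - 1) \<le> real (card S') * (real \<Delta> - 1)"
    using zero_forcing_number_le[OF finV S'(1)] \<open>\<Delta> \<ge> 2\<close> by (intro mult_right_mono) auto
  also have "\<dots> \<le> (real \<Delta> - 2) * real (card V) - (real \<Delta> - real \<delta>) + 2"
  proof -
    have "real_of_int (int (card V) + (int \<Delta> - int \<delta> - 2))
        \<le> real_of_int ((int \<Delta> - 1) * (int (card V) - int (card S')))"
      using S'(2) by linarith
    then show ?thesis by (simp add: algebra_simps)
  qed
  finally show ?thesis
    using \<open>\<Delta> \<ge> 2\<close> by (simp add: \<Delta>_def \<delta>_def pos_le_divide_eq)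
qed

end
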